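(* Let $d \geq 1$ and let $\Sigma$ be a $d \times d$ positive semidefinite matrix with $\operatorname{Tr}(\Sigma) = 1$. Let $f(\boldsymbol{z}) = \boldsymbol{w}^T\boldsymbol{z} + \boldsymbol{b}$ be a binary linear classifier with $\boldsymbol{w} \in \mathbb{R}^d\setminus\{\boldsymbol{0}\}$, $\boldsymbol{b} \in \mathbb{R}$, and let $\boldsymbol{x} \in \mathbb{R}^d$ with $f(\boldsymbol{x}) \neq 0$. Then for every $0 < \varepsilon < \frac{1}{3}$, \[ \sqrt{\frac{1}{2\ln(1/\varepsilon)}}\;\frac{\|\boldsymbol{w}\|_2}{\|\sqrt{\Sigma}\boldsymbol{w}\|_2} \leq \frac{r_{\Sigma,\varepsilon}(\boldsymbol{x})}{\|\boldsymbol{r}^*_2(\boldsymbol{x})\|_2} \leq \sqrt{\frac{1}{1 - \sqrt{3\varepsilon}}}\;\frac{\|\boldsymbol{w}\|_2}{\|\sqrt{\Sigma}\boldsymbol{w}\|_2}. \]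
   Context: The predicted label is $g(\boldsymbol{z}) = 1$ if $f(\boldsymbol{z}) > 0$ and $g(\boldsymbol{z}) = 0$ otherwise. $\sqrt{\Sigma}$ is the symmetric positive semidefinite square root of $\Sigma$. Let $\boldsymbol{v} \sim \mathcal{N}(\boldsymbol{0}, \Sigma)$. For $\varepsilon > 0$, $r_{\Sigma,\varepsilon}(\boldsymbol{x}) = \inf\{|\alpha| : \alpha\in\mathbb{R},\ \mathbb{P}_{\boldsymbol{v}}\{g(\boldsymbol{x}+\alpha\boldsymbol{v}) \neq g(\boldsymbol{x})\} \geq \varepsilon\}$, with $\inf\emptyset = +\infty$. Also $\|\boldsymbol{r}^*_2(\boldsymbol{x})\|_2 = \inf\{\|\boldsymbol{r}\|_2 : g(\boldsymbol{x}+\boldsymbol{r}) \neq g(\boldsymbol{x})\}$, the Euclidean distance from $\boldsymbol{x}$ to the decision boundary. A fraction with zero denominator is read as $+\infty$. *)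

theory Defs
  imports "HOL-Analysis.Analysis"
begin

definition psd_matrix :: "real^'n^'n \<Rightarrow> bool" where
  "psd_matrix A \<longleftrightarrow> transpose A = A \<and> (\<forall>x. 0 \<le> x \<bullet> (A *v x))"

definition psd_sqrt :: "real^'n^'n \<Rightarrow> real^'n^'n" where
  "psd_sqrt A = (THE S. psd_matrix S \<and> S ** S = A)"

definition std_gaussian :: "(real^'n) measure" where
  "std_gaussian = density lborel
     (\<lambda>z. ennreal ((2 * pi) powr (- real CARD('n) / 2) * exp (- (norm z)\<^sup>2 / 2)))"

text \<open>The Gaussian N(0, Sigma), realised as the law of sqrt(Sigma) g with g standard Gaussian.\<close>
definition gaussian :: "real^'n^'n \<Rightarrow> (real^'n) measure" where
  "gaussian \<Sigma> = distr std_gaussian borel (\<lambda>z. psd_sqrt \<Sigma> *v z)"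

definition lin_f :: "real^'n \<Rightarrow> real \<Rightarrow> real^'n \<Rightarrow> real" where
  "lin_f w b z = w \<bullet> z + b"

definition lin_label :: "real^'n \<Rightarrow> real \<Rightarrow> real^'n \<Rightarrow> nat" where
  "lin_label w b z = (if lin_f w b z > 0 then 1 else 0)"

text \<open>Gaussian robustness radius r_{Sigma,eps}(x) (Inf of empty set is +infinity).\<close>
definition noise_radius :: "real^'n \<Rightarrow> real \<Rightarrow> real^'n^'n \<Rightarrow> real \<Rightarrow> real^'n \<Rightarrow> ereal" where
  "noise_radius w b \<Sigma> \<epsilon> x =
     Inf {ereal \<bar>\<alpha>\<bar> | \<alpha>. measure (gaussian \<Sigma>)
            {v \<in> space (gaussian \<Sigma>). lin_label w b (x + \<alpha> *\<^sub>R v) \<noteq> lin_label w b x} \<ge> \<epsilon>}"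

definition boundary_dist :: "real^'n \<Rightarrow> real \<Rightarrow> real^'n \<Rightarrow> real" where
  "boundary_dist w b x = Inf {norm r | r. lin_label w b (x + r) \<noteq> lin_label w b x}"

definition efrac :: "ereal \<Rightarrow> real \<Rightarrow> ereal" where
  "efrac a c = (if c = 0 then \<infinity> else a / ereal c)"

end

theory Submission
  imports Defs "HOL-Probability.Probability"
begin

text \<open>Along \<open>x + \<alpha> v\<close> the classifier value is \<open>f(x) + \<alpha> (w \<bullet> v)\<close>, and for
  \<open>v \<sim> N(0, \<Sigma>)\<close> the variable \<open>w \<bullet> v\<close> is normal with standard deviation
  \<open>\<sigma> = \<parallel>\<surd>\<Sigma> w\<parallel>\<close>. The label flips with the probability that \<open>\<sigma> \<bar>\<alpha>\<bar> Y \<ge> \<bar>f(x)\<bar>\<close> for a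
  standard normal \<open>Y\<close>. The Chernoff bound \<open>P(Y \<ge> s) \<le> exp (- s\<^sup>2 / 2)\<close>
  makes this probability smaller than \<open>\<epsilon>\<close> as long as \<open>\<bar>\<alpha>\<bar> < \<bar>f(x)\<bar> / (\<sigma> sqrt (2 ln (1/\<epsilon>)))\<close>, while
  \<open>P(Y > t) \<ge> 1/2 - t / sqrt (2 pi)\<close> at \<open>t = sqrt (1 - sqrt (3 \<epsilon>))\<close> shows that
  \<open>\<bar>\<alpha>\<bar> = \<bar>f(x)\<bar> / (\<sigma> t)\<close> suffices. Dividing by the distance \<open>\<bar>f(x)\<bar> / \<parallel>w\<parallel>\<close> to the hyperplane
  gives the two bounds.\<close>

section \<open>Self-adjoint operators and the positive semidefinite square root\<close>

lemma quadratic_nonneg_imp_linear_coeff_zero: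
  fixes a k :: real
  assumes "\<And>t. 0 \<le> 2*t*a + t^2*k"
  shows "a = 0"
proof (rule ccontr)
  assume "a \<noteq> 0"
  define K where "K = \<bar>k\<bar> + 1"
  have K: "0 < K" "k - 2*K < 0" by (auto simp: K_def)
  have "0 \<le> 2*(-a/K)*a + (-a/K)^2*k" by (rule assms)
  also have "\<dots> = a^2 * (k - 2*K) / K^2"
    using K by (simp add: field_simps power2_eq_square)
  also have "\<dots> < 0"
    using \<open>a \<noteq> 0\<close> K by (intro divide_neg_pos mult_pos_neg) auto
  finally show False by simp
qed

lemma nonneg_self_adjoint_form_zero_imp_zero:
  fixes h :: "'a::real_inner \<Rightarrow> 'a"
  assumes lin: "linear h" and sym: "\<And>x y. inner x (h y) = inner (h x) y"
    and pos: "\<And>x. 0 \<le> inner x (h x)" and zero: "inner x (h x) = 0"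
  shows "h x = 0"
proof -
  define y where "y = h x"
  have "inner y y = 0"
  proof (rule quadratic_nonneg_imp_linear_coeff_zero[where k = "inner y (h y)"])
    fix t :: real
    have "0 \<le> inner (x + t *\<^sub>R y) (h (x + t *\<^sub>R y))" by (rule pos)
    also have "\<dots> = inner x (h x) + t * inner x (h y) + t * inner y (h x) + t^2 * inner y (h y)"
      by (simp add: linear_add[OF lin] linear_scale[OF lin] inner_add_left inner_add_right
          power2_eq_square algebra_simps)
    also have "inner x (h y) = inner y y" using sym[of x y] by (simp add: y_def inner_commute)
    finally show "0 \<le> 2*t*inner y y + t^2 * inner y (h y)" using zero by (simp add: y_def)
  qed
  thus ?thesis by (simp add: y_def)
qed

lemma inner_orthonormal_sum:
  fixes B :: "'a::real_inner set"
  assumes "finite B" "pairwise orthogonal B" "e \<in> B" "norm e = 1"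
  shows "inner e (\<Sum>b\<in>B. c b *\<^sub>R b) = c e"
proof -
  have "inner e (\<Sum>b\<in>B. c b *\<^sub>R b) = (\<Sum>b\<in>B. c b * inner e b)"
    by (simp add: inner_sum_right)
  also have "\<dots> = c e * inner e e + (\<Sum>b\<in>B - {e}. c b * inner e b)"
    using assms by (simp add: sum.remove)
  also have "(\<Sum>b\<in>B - {e}. c b * inner e b) = 0"
    using assms(2,3) by (intro sum.neutral) (auto simp: pairwise_def orthogonal_def)
  finally show ?thesis using assms(4) by (simp add: dot_square_norm)
qed

text \<open>Expanding the form along the defect \<open>inner y0 (h y0) *\<^sub>R y0 - h y0\<close> shows that its
  first-order term, the squared norm of the defect, must vanish.\<close>
lemma self_adjoint_maximiser_is_eigenvector:
  fixes h :: "'a::real_inner \<Rightarrow> 'a"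
  assumes lin: "linear h" and sym: "\<And>x y. inner x (h y) = inner (h x) y"
    and V: "subspace V" "h ` V \<subseteq> V" and y0: "y0 \<in> V" "norm y0 = 1"
    and max: "\<And>y. y \<in> V \<Longrightarrow> inner y (h y) \<le> inner y0 (h y0) * (norm y)^2"
  shows "h y0 = inner y0 (h y0) *\<^sub>R y0"
proof -
  define M where "M = inner y0 (h y0)"
  define z where "z = M *\<^sub>R y0 - h y0"
  define g where "g y = M * (norm y)^2 - inner y (h y)" for y
  have zV: "z \<in> V" unfolding z_def using V y0 by (intro subspace_diff subspace_scale) auto
  have "inner z z = 0"
  proof (rule quadratic_nonneg_imp_linear_coeff_zero[where k = "g z"])
    fix t :: real
    have "y0 + t *\<^sub>R z \<in> V" using V y0 zV by (intro subspace_add subspace_scale) auto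
    hence "0 \<le> g (y0 + t *\<^sub>R z)" using max by (simp add: g_def M_def)
    also have "g (y0 + t *\<^sub>R z) = 2*t*inner z z + t^2 * g z"
    proof -
      have norm_sq: "(norm v)^2 = inner v v" for v :: 'a by (simp add: dot_square_norm)
      have zh: "inner z (h y0) = M * inner y0 z - inner z z"
        by (simp add: z_def inner_diff_left inner_diff_right inner_commute algebra_simps)
      have sym_z: "inner y0 (h z) = inner z (h y0)" using sym[of y0 z] by (simp add: inner_commute)
      have yy: "inner y0 y0 = 1" using y0 by (simp add: dot_square_norm)
      have "h (y0 + t *\<^sub>R z) = h y0 + t *\<^sub>R h z"
        by (simp add: linear_add[OF lin] linear_scale[OF lin])
      thus ?thesis
        unfolding g_def norm_sq
        by (simp add: inner_add_left inner_add_right yy inner_commute[of z y0] M_def[symmetric]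
            sym_z zh power2_eq_square algebra_simps)
    qed
    finally show "0 \<le> 2*t*inner z z + t^2 * g z" .
  qed
  thus ?thesis by (simp add: z_def M_def)
qed

lemma self_adjoint_eigenvector_orthogonal:
  fixes h :: "'a::euclidean_space \<Rightarrow> 'a"
  assumes lin: "linear h" and sym: "\<And>x y. inner x (h y) = inner (h x) y"
    and eig: "\<And>e. e \<in> B \<Longrightarrow> \<exists>l. h e = l *\<^sub>R e"
    and r: "\<forall>e\<in>B. inner e r = 0" "r \<noteq> 0"
  shows "\<exists>e0. (\<forall>e\<in>B. inner e e0 = 0) \<and> norm e0 = 1 \<and> (\<exists>l. h e0 = l *\<^sub>R e0)"
proof -
  define V where "V = {y. \<forall>e\<in>B. inner e y = 0}"
  have V: "subspace V" unfolding subspace_def V_def by (auto simp: inner_add_right)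
  have inv: "h ` V \<subseteq> V"
  proof (clarsimp simp: V_def)
    fix y e assume "\<forall>e\<in>B. inner e y = 0" "e \<in> B"
    moreover obtain l where "h e = l *\<^sub>R e" using eig \<open>e \<in> B\<close> by blast
    ultimately show "inner e (h y) = 0" using sym[of e y] by simp
  qed
  define K where "K = sphere 0 1 \<inter> V"
  have "compact K" unfolding K_def using compact_sphere closed_subspace[OF V] by blast
  moreover have "r /\<^sub>R norm r \<in> K" using r V by (auto simp: K_def V_def)
  moreover have "continuous_on K (\<lambda>y. inner y (h y))"
    using lin by (intro continuous_intros linear_continuous_on) (simp add: linear_conv_bounded_linear)
  ultimately obtain y0 where y0: "y0 \<in> K" "\<And>y. y \<in> K \<Longrightarrow> inner y (h y) \<le> inner y0 (h y0)"
    using continuous_attains_sup[of K] by blast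
  have max: "inner y (h y) \<le> inner y0 (h y0) * (norm y)^2" if "y \<in> V" for y
  proof (cases "y = 0")
    case True thus ?thesis by (simp add: linear_0[OF lin])
  next
    case False
    have "y /\<^sub>R norm y \<in> K" using that False V by (auto simp: K_def subspace_scale)
    hence "inner (y /\<^sub>R norm y) (h (y /\<^sub>R norm y)) \<le> inner y0 (h y0)" by (rule y0(2))
    hence "inner y (h y) / (norm y)^2 \<le> inner y0 (h y0)"
      by (simp add: linear_scale[OF lin] power2_eq_square divide_simps)
    thus ?thesis using False by (simp add: divide_simps)
  qed
  have "y0 \<in> V" "norm y0 = 1" using y0(1) by (auto simp: K_def)
  from self_adjoint_maximiser_is_eigenvector[OF lin sym V inv this max] this show ?thesis
    by (auto simp: V_def)
qed

lemma self_adjoint_orthonormal_eigenbasis: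
  fixes h :: "'a::euclidean_space \<Rightarrow> 'a"
  assumes lin: "linear h" and sym: "\<And>x y. inner x (h y) = inner (h x) y"
  obtains B where "finite B" "pairwise orthogonal B" "\<And>e. e \<in> B \<Longrightarrow> norm e = 1"
    "\<And>e. e \<in> B \<Longrightarrow> \<exists>l. h e = l *\<^sub>R e" "\<And>x. x = (\<Sum>e\<in>B. inner e x *\<^sub>R e)"
proof -
  define P where "P B \<longleftrightarrow> finite B \<and> pairwise orthogonal B
    \<and> (\<forall>e\<in>B. norm e = 1 \<and> (\<exists>l. h e = l *\<^sub>R e))" for B :: "'a set"
  have card_bound: "card B < DIM('a) + 1" if "P B" for B
  proof -
    have "independent B"
      using that by (intro pairwise_orthogonal_independent) (auto simp: P_def)
    thus ?thesis using independent_bound by fastforce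
  qed
  have "P {}" by (simp add: P_def)
  then obtain B where PB: "P B" and maxB: "\<And>B'. P B' \<Longrightarrow> card B' \<le> card B"
    using ex_has_greatest_nat[of P "{}" card "DIM('a) + 1"] card_bound by blast
  have fin: "finite B" and orth: "pairwise orthogonal B" and unit: "\<And>e. e \<in> B \<Longrightarrow> norm e = 1"
    and eig: "\<And>e. e \<in> B \<Longrightarrow> \<exists>l. h e = l *\<^sub>R e"
    using PB by (auto simp: P_def)
  have "x = (\<Sum>e\<in>B. inner e x *\<^sub>R e)" for x
  proof (rule ccontr)
    define r where "r = x - (\<Sum>e\<in>B. inner e x *\<^sub>R e)"
    assume "x \<noteq> (\<Sum>e\<in>B. inner e x *\<^sub>R e)"
    hence "r \<noteq> 0" by (simp add: r_def)
    moreover have "\<forall>e\<in>B. inner e r = 0"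
      using inner_orthonormal_sum[OF fin orth _ unit] by (simp add: r_def inner_diff_right)
    ultimately obtain e0 where e0: "\<forall>e\<in>B. inner e e0 = 0" "norm e0 = 1" "\<exists>l. h e0 = l *\<^sub>R e0"
      using self_adjoint_eigenvector_orthogonal[OF lin sym eig] by blast
    hence "e0 \<notin> B" by force
    moreover have "P (insert e0 B)"
      using PB e0 unfolding P_def pairwise_insert orthogonal_def by (auto simp: inner_commute)
    ultimately show False using maxB[of "insert e0 B"] fin by simp
  qed
  thus thesis using that fin orth unit eig by blast
qed

lemma psd_matrix_iff:
  "psd_matrix A \<longleftrightarrow> (\<forall>x y. inner x (A *v y) = inner (A *v x) y) \<and> (\<forall>x. 0 \<le> inner x (A *v x))"
proof -
  have adj: "inner x (A *v y) = inner (transpose A *v x) y" for x y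
    by (simp add: dot_lmul_matrix[symmetric])
  have "transpose A = A \<longleftrightarrow> (\<forall>x y. inner x (A *v y) = inner (A *v x) y)"
  proof
    assume "\<forall>x y. inner x (A *v y) = inner (A *v x) y"
    hence "inner (transpose A *v x - A *v x) y = 0" for x y by (simp add: adj inner_diff_left)
    hence "transpose A *v x = A *v x" for x by (metis inner_eq_zero_iff right_minus_eq)
    thus "transpose A = A" by (simp add: matrix_eq)
  qed (simp add: adj)
  thus ?thesis by (simp add: psd_matrix_def)
qed

lemma psd_sqrt_exists:
  fixes A :: "real^'n^'n"
  assumes "psd_matrix A"
  shows "\<exists>S. psd_matrix S \<and> S ** S = A"
proof -
  have sym: "\<And>x y. inner x (A *v y) = inner (A *v x) y" and pos: "\<And>x. 0 \<le> inner x (A *v x)"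
    using assms by (auto simp: psd_matrix_iff)
  obtain B where fin: "finite B" and orth: "pairwise orthogonal B" and unit: "\<And>e. e \<in> B \<Longrightarrow> norm e = 1"
    and eig: "\<And>e. e \<in> B \<Longrightarrow> \<exists>l. A *v e = l *\<^sub>R e" and expand: "\<And>x. x = (\<Sum>e\<in>B. inner e x *\<^sub>R e)"
    using self_adjoint_orthonormal_eigenbasis[of "(*v) A", OF matrix_vector_mul_linear sym] by blast
  define ev where "ev e = inner e (A *v e)" for e
  have eigval: "A *v e = ev e *\<^sub>R e" if e: "e \<in> B" for e
  proof -
    obtain l where l: "A *v e = l *\<^sub>R e" using eig[OF e] by blast
    moreover have "inner e e = 1" using unit[OF e] by (simp add: dot_square_norm)
    ultimately show ?thesis by (simp add: ev_def)
  qed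
  have ev_nonneg: "0 \<le> ev e" for e using pos by (simp add: ev_def)
  define s where "s x = (\<Sum>e\<in>B. (sqrt (ev e) * inner e x) *\<^sub>R e)" for x
  have "linear s"
    unfolding s_def by (intro linear_compose_sum) (auto intro!: linearI simp: inner_add_right algebra_simps)
  then have Sv: "matrix s *v x = s x" for x by (simp add: matrix_works)
  have inner_s: "inner x (s y) = (\<Sum>e\<in>B. sqrt (ev e) * inner e y * inner e x)" for x y
    unfolding s_def by (simp add: inner_sum_right inner_commute mult_ac)
  have "psd_matrix (matrix s)"
    unfolding psd_matrix_iff Sv
  proof (intro conjI allI)
    fix x y show "inner x (s y) = inner (s x) y"
      unfolding inner_commute[of "s x" y] inner_s by (intro sum.cong refl) (simp add: mult_ac)
  next
    fix x show "0 \<le> inner x (s x)"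
      unfolding inner_s using ev_nonneg by (intro sum_nonneg) (simp add: mult.assoc)
  qed
  moreover have "s (s x) = A *v x" for x
  proof -
    have "s (s x) = (\<Sum>e\<in>B. (ev e * inner e x) *\<^sub>R e)"
      unfolding s_def[of "s x"] using ev_nonneg inner_orthonormal_sum[OF fin orth _ unit]
      by (intro sum.cong refl) (simp add: s_def mult.assoc[symmetric])
    also have "\<dots> = A *v (\<Sum>e\<in>B. inner e x *\<^sub>R e)"
      by (simp add: eigval linear_sum[OF matrix_vector_mul_linear] matrix_vector_mult_scaleR mult.commute)
    finally show ?thesis using expand[of x] by simp
  qed
  hence "matrix s ** matrix s = A" by (simp add: matrix_eq matrix_vector_mul_assoc[symmetric] Sv)
  ultimately show ?thesis by blast
qed

lemma psd_sqrt_unique: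
  fixes S T :: "real^'n^'n"
  assumes S: "psd_matrix S" and T: "psd_matrix T" and eq: "S ** S = T ** T"
  shows "S = T"
proof (rule ccontr)
  assume "S \<noteq> T"
  have symS: "\<And>x y. inner x (S *v y) = inner (S *v x) y" and posS: "\<And>x. 0 \<le> inner x (S *v x)"
    using S by (auto simp: psd_matrix_iff)
  have symT: "\<And>x y. inner x (T *v y) = inner (T *v x) y" and posT: "\<And>x. 0 \<le> inner x (T *v x)"
    using T by (auto simp: psd_matrix_iff)
  define d where "d x = S *v x - T *v x" for x
  have lin: "linear d" unfolding d_def by (intro linear_compose_sub) auto
  have sym: "inner x (d y) = inner (d x) y" for x y
    using symS[of x y] symT[of x y] by (simp add: d_def inner_diff_left inner_diff_right)
  obtain B where eig: "\<And>e. e \<in> B \<Longrightarrow> \<exists>l. d e = l *\<^sub>R e"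
    and expand: "\<And>x. x = (\<Sum>e\<in>B. inner e x *\<^sub>R e)"
    using self_adjoint_orthonormal_eigenbasis[OF lin sym] by metis
  have "\<exists>e\<in>B. d e \<noteq> 0"
  proof (rule ccontr)
    assume "\<not> (\<exists>e\<in>B. d e \<noteq> 0)"
    hence "d (\<Sum>e\<in>B. inner e x *\<^sub>R e) = 0" for x
      by (simp add: linear_sum[OF lin] linear_scale[OF lin] sum.neutral)
    hence "d x = 0" for x using arg_cong[OF expand[of x], of d] by simp
    hence "S *v x = T *v x" for x by (simp add: d_def)
    thus False using \<open>S \<noteq> T\<close> by (simp add: matrix_eq)
  qed
  then obtain e where "e \<in> B" "d e \<noteq> 0" by blast
  moreover obtain l where "d e = l *\<^sub>R e" using eig[OF \<open>e \<in> B\<close>] by blast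
  ultimately have l: "d e = l *\<^sub>R e" "l \<noteq> 0" by auto
  txt \<open>Applying \<open>S\<^sup>2 - T\<^sup>2 = S d + d T\<close> to the eigenvector \<open>e\<close> of \<open>d\<close>:\<close>
  have "inner e (S *v d e) + inner e (d (T *v e)) = 0"
    using arg_cong[OF eq, of "\<lambda>M. inner e (M *v e)"]
    by (simp add: d_def matrix_vector_mul_assoc[symmetric] matrix_vector_mult_diff_distrib
        inner_diff_right)
  hence "l * (inner e (S *v e) + inner e (T *v e)) = 0"
    by (simp add: l sym matrix_vector_mult_scaleR algebra_simps)
  hence "inner e (S *v e) = 0" "inner e (T *v e) = 0"
    using l(2) posS[of e] posT[of e] by (auto simp: add_nonneg_eq_0_iff)
  hence "S *v e = 0" "T *v e = 0"
    using nonneg_self_adjoint_form_zero_imp_zero[of "(*v) S", OF _ symS posS]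
      nonneg_self_adjoint_form_zero_imp_zero[of "(*v) T", OF _ symT posT] by auto
  thus False using \<open>d e \<noteq> 0\<close> by (simp add: d_def)
qed

lemma psd_matrix_psd_sqrt:
  assumes "psd_matrix A"
  shows "psd_matrix (psd_sqrt A)"
proof -
  have "\<exists>!S. psd_matrix S \<and> S ** S = A"
    using psd_sqrt_exists[OF assms] psd_sqrt_unique by metis
  thus ?thesis unfolding psd_sqrt_def by (rule conjunct1[OF theI'])
qed

section \<open>The standard Gaussian measure on \<open>real^'n\<close>\<close>

lemma integrable_lborel_prod:
  fixes k :: "'e::euclidean_space \<Rightarrow> real \<Rightarrow> complex"
  assumes int: "\<And>b. b \<in> Basis \<Longrightarrow> integrable lborel (k b)"
  shows "(\<integral>x. (\<Prod>b\<in>Basis. k b (x \<bullet> b)) \<partial>(lborel::'e measure)) = (\<Prod>b\<in>Basis. \<integral>y. k b y \<partial>lborel)"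
proof -
  interpret product_sigma_finite "\<lambda>_::'e. lborel :: real measure" by standard
  have [measurable]: "k b \<in> borel_measurable borel" if "b \<in> Basis" for b
    using borel_measurable_integrable[OF int[OF that]] by simp
  have "(\<integral>x. (\<Prod>b\<in>Basis. k b (x \<bullet> b)) \<partial>(lborel::'e measure))
      = (\<integral>f. (\<Prod>b\<in>Basis. k b ((\<Sum>c\<in>Basis. f c *\<^sub>R c) \<bullet> b)) \<partial>(\<Pi>\<^sub>M b\<in>Basis. lborel))"
    by (subst lborel_eq) (rule integral_distr; measurable)
  also have "\<dots> = (\<integral>f. (\<Prod>b\<in>Basis. k b (f b)) \<partial>(\<Pi>\<^sub>M b\<in>Basis. lborel))"
    by (intro Bochner_Integration.integral_cong refl prod.cong)
      (simp add: inner_sum_left inner_Basis if_distrib cong: if_cong)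
  also have "\<dots> = (\<Prod>b\<in>Basis. \<integral>y. k b y \<partial>lborel)"
    by (rule product_integral_prod) (auto intro: int)
  finally show ?thesis .
qed

lemma std_gaussian_density_eq_prod:
  fixes z :: "real^'n"
  shows "(2 * pi) powr (- real CARD('n) / 2) * exp (- (norm z)\<^sup>2 / 2)
        = (\<Prod>b\<in>Basis. std_normal_density (z \<bullet> b))"
proof -
  have "(norm z)\<^sup>2 = (\<Sum>b\<in>Basis. (z \<bullet> b)^2)"
    unfolding power2_norm_eq_inner euclidean_inner[of z z] by (simp add: power2_eq_square)
  hence "exp (- (norm z)\<^sup>2 / 2) = (\<Prod>b\<in>Basis. exp (- (z \<bullet> b)\<^sup>2 / 2))"
    by (simp add: exp_sum[symmetric] sum_divide_distrib sum_negf)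
  moreover have "(2 * pi) powr (- real CARD('n) / 2) = (\<Prod>b\<in>(Basis :: (real^'n) set). 1 / sqrt (2*pi))"
  proof -
    have "(2 * pi) powr (- real CARD('n) / 2) = ((2*pi) powr (-1/2)) ^ CARD('n)"
      by (simp add: powr_power)
    also have "(2*pi) powr (-1/2) = 1 / sqrt (2*pi)"
      by (simp add: powr_minus_divide powr_half_sqrt[symmetric])
    finally show ?thesis by simp
  qed
  ultimately show ?thesis unfolding std_normal_density_def prod.distrib by (simp only:)
qed

lemma std_gaussian_eq_density_prod:
  "(std_gaussian :: (real^'n) measure)
     = density lborel (\<lambda>z. ennreal (\<Prod>b\<in>Basis. std_normal_density (z \<bullet> b)))"
  unfolding std_gaussian_def std_gaussian_density_eq_prod ..

lemma sets_std_gaussian [measurable_cong, simp]: "sets std_gaussian = sets borel"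
  by (simp add: std_gaussian_def)

lemma space_std_gaussian [simp]: "space std_gaussian = UNIV"
  by (simp add: std_gaussian_def)

lemma nn_integral_std_normal_density: "(\<integral>\<^sup>+y. ennreal (std_normal_density y) \<partial>lborel) = 1"
proof -
  interpret real_distribution std_normal_distribution by (rule real_dist_normal_dist)
  show ?thesis using emeasure_space_1 by (simp add: emeasure_density)
qed

lemma prob_space_std_gaussian: "prob_space (std_gaussian :: (real^'n) measure)"
proof
  have "emeasure (std_gaussian::(real^'n) measure) (space std_gaussian)
      = (\<integral>\<^sup>+z. (\<Prod>b\<in>Basis. ennreal (std_normal_density (z \<bullet> b))) \<partial>(lborel::(real^'n) measure))"
    unfolding std_gaussian_eq_density_prod by (simp add: emeasure_density prod_ennreal)
  also have "\<dots> = (\<Prod>b\<in>(Basis::(real^'n) set). \<integral>\<^sup>+y. ennreal (std_normal_density y) \<partial>lborel)"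
    by (rule nn_integral_lborel_prod) auto
  finally show "emeasure (std_gaussian::(real^'n) measure) (space std_gaussian) = 1"
    by (simp add: nn_integral_std_normal_density)
qed

lemma integrable_std_normal_density_iexp:
  "integrable lborel (\<lambda>y. complex_of_real (std_normal_density y) * iexp (s * y))"
proof -
  interpret real_distribution std_normal_distribution by (rule real_dist_normal_dist)
  have "integrable std_normal_distribution (\<lambda>y. iexp (s * y))"
    by (rule integrable_iexp) auto
  thus ?thesis by (simp add: integrable_density scaleR_conv_of_real)
qed

lemma char_std_gaussian_inner:
  fixes u :: "real^'n"
  shows "char (distr std_gaussian borel (\<lambda>z. u \<bullet> z)) t = exp (- (t * norm u)\<^sup>2 / 2)"
proof -
  let ?k = "\<lambda>b y. complex_of_real (std_normal_density y) * iexp (t * (u \<bullet> b) * y)"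
  have iexp_inner: "iexp (t * (u \<bullet> z)) = (\<Prod>b\<in>Basis. iexp (t * (u \<bullet> b) * (z \<bullet> b)))" for z :: "real^'n"
  proof -
    have "\<i> * complex_of_real (t * (u \<bullet> z)) = (\<Sum>b\<in>Basis. \<i> * complex_of_real (t * (u \<bullet> b) * (z \<bullet> b)))"
      by (simp add: euclidean_inner[of u z] sum_distrib_left mult.assoc)
    thus ?thesis by (simp add: exp_sum)
  qed
  have "char (distr std_gaussian borel (\<lambda>z. u \<bullet> z)) t = (\<integral>z. iexp (t * (u \<bullet> z)) \<partial>std_gaussian)"
    unfolding char_def by (rule integral_distr) auto
  also have "\<dots> = (\<integral>z. (\<Prod>b\<in>Basis. std_normal_density (z \<bullet> b)) *\<^sub>R iexp (t * (u \<bullet> z)) \<partial>lborel)"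
    unfolding std_gaussian_eq_density_prod by (rule integral_density) (auto intro!: prod_nonneg)
  also have "\<dots> = (\<integral>z. (\<Prod>b\<in>Basis. ?k b (z \<bullet> b)) \<partial>lborel)"
    by (intro Bochner_Integration.integral_cong refl, subst iexp_inner)
      (simp add: scaleR_conv_of_real prod.distrib)
  also have "\<dots> = (\<Prod>b\<in>Basis. \<integral>y. ?k b y \<partial>lborel)"
    by (rule integrable_lborel_prod) (rule integrable_std_normal_density_iexp)
  also have "\<dots> = (\<Prod>b\<in>Basis. char std_normal_distribution (t * (u \<bullet> b)))"
    unfolding char_def by (subst integral_density) (auto simp: scaleR_conv_of_real)
  also have "\<dots> = (\<Prod>b\<in>(Basis::(real^'n) set). exp (- (t * (u \<bullet> b))\<^sup>2 / 2))"
    by (simp add: char_std_normal_distribution)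
  also have "\<dots> = exp (- (t * norm u)\<^sup>2 / 2)"
  proof -
    have "(norm u)\<^sup>2 = (\<Sum>b\<in>Basis. (u \<bullet> b) * (u \<bullet> b))"
      by (simp add: power2_norm_eq_inner euclidean_inner[of u u])
    hence "- (t * norm u)\<^sup>2 / 2 = (\<Sum>b\<in>(Basis::(real^'n) set). - (t * (u \<bullet> b))\<^sup>2 / 2)"
      by (simp add: power_mult_distrib sum_divide_distrib sum_negf sum_distrib_left power2_eq_square mult_ac)
    thus ?thesis by (simp add: exp_sum)
  qed
  finally show ?thesis .
qed

lemma char_std_normal_scaled:
  "char (distr std_normal_distribution borel ((*) s)) t = exp (- (t * s)\<^sup>2 / 2)"
proof -
  have "char (distr std_normal_distribution borel ((*) s)) t = char std_normal_distribution (t * s)"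
    unfolding char_def by (subst integral_distr) (auto simp: mult_ac)
  thus ?thesis by (simp add: char_std_normal_distribution)
qed

lemma distr_std_gaussian_inner:
  fixes u :: "real^'n"
  shows "distr std_gaussian borel (\<lambda>z. u \<bullet> z) = distr std_normal_distribution borel ((*) (norm u))"
proof (rule Levy_uniqueness)
  interpret G: prob_space "std_gaussian :: (real^'n) measure" by (rule prob_space_std_gaussian)
  interpret N: real_distribution std_normal_distribution by (rule real_dist_normal_dist)
  show "real_distribution (distr std_gaussian borel (\<lambda>z. u \<bullet> z))"
    by (rule G.real_distribution_distr) simp
  show "real_distribution (distr std_normal_distribution borel ((*) (norm u)))"
    by (rule N.real_distribution_distr) simp
  show "char (distr std_gaussian borel (\<lambda>z. u \<bullet> z)) = char (distr std_normal_distribution borel ((*) (norm u)))"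
    by (rule ext) (simp add: char_std_gaussian_inner char_std_normal_scaled)
qed

section \<open>Tail bounds for the standard normal distribution\<close>

lemma nn_integral_std_normal_density_exp:
  "(\<integral>\<^sup>+y. ennreal (std_normal_density y * exp (a*y)) \<partial>lborel) = ennreal (exp (a^2/2))"
proof -
  have shift: "std_normal_density y * exp (a*y) = exp (a^2/2) * std_normal_density (-a + y)" for y
  proof -
    have "exp (- y\<^sup>2 / 2) * exp (a*y) = exp (a^2/2) * exp (-(-a+y)\<^sup>2/2)"
      unfolding mult_exp_exp by (simp add: power2_eq_square field_simps)
    thus ?thesis by (simp add: std_normal_density_def)
  qed
  have "(\<integral>\<^sup>+y. ennreal (std_normal_density y * exp (a*y)) \<partial>lborel)
      = ennreal (exp (a^2/2)) * (\<integral>\<^sup>+y. ennreal (std_normal_density (-a + y)) \<partial>lborel)"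
    by (simp add: shift ennreal_mult nn_integral_cmult)
  also have "(\<integral>\<^sup>+y. ennreal (std_normal_density (-a + y)) \<partial>lborel) = 1"
    using nn_integral_real_affine[of "\<lambda>y. ennreal (std_normal_density y)" 1 "-a"]
    by (simp add: nn_integral_std_normal_density)
  finally show ?thesis by simp
qed

lemma std_normal_chernoff:
  "measure std_normal_distribution {y. c \<le> a*y} \<le> exp (a^2/2 - c)"
proof -
  have "emeasure std_normal_distribution {y. c \<le> a*y}
      = (\<integral>\<^sup>+y. ennreal (std_normal_density y) * indicator {y. c \<le> a*y} y \<partial>lborel)"
    by (subst emeasure_density) (auto simp del: ennreal_indicator)
  also have "\<dots> \<le> (\<integral>\<^sup>+y. ennreal (std_normal_density y * exp (a*y)) * ennreal (exp (-c)) \<partial>lborel)"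
  proof (intro nn_integral_mono)
    fix y
    have "std_normal_density y \<le> std_normal_density y * exp (a*y - c)" if "c \<le> a*y"
      using mult_left_mono[of 1 "exp (a*y - c)" "std_normal_density y"] that by simp
    thus "ennreal (std_normal_density y) * indicator {y. c \<le> a*y} y
          \<le> ennreal (std_normal_density y * exp (a*y)) * ennreal (exp (-c))"
      by (auto simp: ennreal_mult[symmetric] exp_diff exp_minus divide_inverse mult.assoc
          intro!: ennreal_leI split: split_indicator)
  qed
  also have "\<dots> = ennreal (exp (a^2/2)) * ennreal (exp (-c))"
    by (subst nn_integral_multc) (simp_all add: nn_integral_std_normal_density_exp)
  also have "\<dots> = ennreal (exp (a^2/2) * exp (-c))" by (simp add: ennreal_mult)
  finally show ?thesis
    by (simp add: measure_def mult_exp_exp enn2real_leI)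
qed

lemma std_normal_tail_le:
  assumes "0 < c" "a \<noteq> 0"
  shows "measure std_normal_distribution {y. c \<le> a*y} \<le> exp (- (c/a)\<^sup>2 / 2)"
proof -
  have "c \<le> a*y \<longleftrightarrow> (c/a)^2 \<le> (c/a) * y" for y
  proof -
    have "0 < c/a^2" using assms by simp
    hence "c \<le> a*y \<longleftrightarrow> (c/a^2) * c \<le> (c/a^2) * (a*y)"
      by (rule mult_le_cancel_left_pos[symmetric])
    thus ?thesis using assms(2) by (simp add: power2_eq_square)
  qed
  hence "{y. c \<le> a*y} = {y. (c/a)^2 \<le> (c/a) * y}" by simp
  also have "measure std_normal_distribution \<dots> \<le> exp ((c/a)^2/2 - (c/a)^2)"
    by (rule std_normal_chernoff)
  also have "(c/a)^2/2 - (c/a)^2 = - (c/a)\<^sup>2 / 2"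
    using assms by (simp add: power2_eq_square field_simps)
  finally show ?thesis .
qed

lemma std_normal_nonneg_ge_half: "1/2 \<le> measure std_normal_distribution {0..}"
proof -
  let ?N = std_normal_distribution
  interpret real_distribution ?N by (rule real_dist_normal_dist)
  have "emeasure ?N {0..} = (\<integral>\<^sup>+y. ennreal (std_normal_density y) * indicator {0..} y \<partial>lborel)"
    by (subst emeasure_density) (auto simp del: ennreal_indicator)
  also have "\<dots> = (\<integral>\<^sup>+y. ennreal (std_normal_density (0 + -1*y)) * indicator {0..} (0 + -1*y) \<partial>lborel)"
    by (subst nn_integral_real_affine[where c="-1" and t=0]) auto
  also have "\<dots> = (\<integral>\<^sup>+y. ennreal (std_normal_density y) * indicator {..0} y \<partial>lborel)"
    by (intro nn_integral_cong) (simp add: std_normal_density_def split: split_indicator)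
  also have "\<dots> = emeasure ?N {..0}"
    by (subst emeasure_density) (auto simp del: ennreal_indicator)
  finally have "measure ?N {0..} = measure ?N {..0}" by (simp add: measure_def)
  moreover have "1 \<le> measure ?N {0..} + measure ?N {..0}"
  proof -
    have "{0..} \<union> {..0} = (UNIV :: real set)" by auto
    thus ?thesis using measure_Un_le[of "{0..}" ?N "{..0}"] prob_space by simp
  qed
  ultimately show ?thesis by simp
qed

lemma std_normal_interval_le:
  assumes "0 \<le> t"
  shows "measure std_normal_distribution {0..t} \<le> t / sqrt (2*pi)"
proof -
  have "emeasure std_normal_distribution {0..t}
      = (\<integral>\<^sup>+y. ennreal (std_normal_density y) * indicator {0..t} y \<partial>lborel)"
    by (subst emeasure_density) (auto simp del: ennreal_indicator)
  also have "\<dots> \<le> (\<integral>\<^sup>+y. ennreal (1 / sqrt (2*pi)) * indicator {0..t} y \<partial>lborel)"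
  proof (intro nn_integral_mono)
    fix y
    have "std_normal_density y \<le> 1 / sqrt (2*pi)"
      unfolding std_normal_density_def by (intro mult_left_le) auto
    thus "ennreal (std_normal_density y) * indicator {0..t} y \<le> ennreal (1 / sqrt (2*pi)) * indicator {0..t} y"
      by (auto split: split_indicator intro: ennreal_leI)
  qed
  also have "\<dots> = ennreal (t / sqrt (2*pi))"
    using assms by (simp add: nn_integral_cmult_indicator ennreal_mult[symmetric])
  finally show ?thesis using assms by (simp add: measure_def enn2real_leI)
qed

lemma std_normal_tail_ge:
  assumes "0 \<le> t"
  shows "1/2 - t / sqrt (2*pi) \<le> measure std_normal_distribution {t<..}"
proof -
  interpret real_distribution std_normal_distribution by (rule real_dist_normal_dist)
  have "{t<..} = {0..} - {0..t}" using assms by auto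
  hence "measure std_normal_distribution {t<..}
      = measure std_normal_distribution {0..} - measure std_normal_distribution {0..t}"
    by (simp add: finite_measure_Diff)
  thus ?thesis using std_normal_nonneg_ge_half std_normal_interval_le[OF assms] by linarith
qed

text \<open>With \<open>q = sqrt (3 * \<epsilon>)\<close> and \<open>u = sqrt (1 - q)\<close> this reads \<open>(1 - u\<^sup>2)\<^sup>2 / 3 \<le> 1/2 - u / sqrt (2*pi)\<close>,
  which follows from \<open>sqrt (2*pi) \<ge> 12/5\<close> and \<open>(u - 5/8)\<^sup>2 \<ge> 0\<close>.\<close>
lemma small_epsilon_le_std_normal_tail_bound:
  assumes "0 < \<epsilon>" "\<epsilon> < 1/3"
  shows "\<epsilon> \<le> 1/2 - sqrt (1 - sqrt (3*\<epsilon>)) / sqrt (2*pi)"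
proof -
  define q where "q = sqrt (3*\<epsilon>)"
  have q: "0 < q" "q < 1" "q^2 = 3*\<epsilon>" using assms by (auto simp: q_def real_sqrt_less_iff)
  define u where "u = sqrt (1 - q)"
  have u: "0 \<le> u" "u \<le> 1" "u^2 = 1 - q" using q by (auto simp: u_def)
  define A where "A = u / sqrt (2*pi)"
  have "12/5 \<le> sqrt (2*pi)"
    by (rule real_le_rsqrt) (use pi_gt3 in \<open>simp add: power2_eq_square\<close>)
  hence "A \<le> u / (12/5)"
    unfolding A_def using u by (intro divide_left_mono) auto
  hence "A \<le> 5/12 * u" by simp
  moreover have "u^4 \<le> u^2"
    using u(1,2) by (simp add: power_decreasing)
  moreover have "0 \<le> u^2 - 5/4*u + 25/64"
    using zero_le_power2[of "u - 5/8"] by (simp add: power2_eq_square algebra_simps)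
  moreover have "3*\<epsilon> = 1 - 2*u^2 + u^4"
  proof -
    have "3*\<epsilon> = (1 - u^2)^2" using q u by simp
    also have "\<dots> = 1 - 2*u^2 + u^4" by (simp add: power2_eq_square power4_eq_xxxx algebra_simps)
    finally show ?thesis .
  qed
  ultimately have "\<epsilon> \<le> 1/2 - A" by linarith
  thus ?thesis by (simp add: A_def u_def q_def)
qed

section \<open>Robustness radius of a linear classifier\<close>

lemma lin_label_flip_iff:
  "lin_label w b (x + r) \<noteq> lin_label w b x \<longleftrightarrow> (lin_f w b x + w \<bullet> r > 0) \<noteq> (lin_f w b x > 0)"
  by (simp add: lin_label_def lin_f_def inner_add_right algebra_simps)

lemma boundary_dist_lin:
  assumes "w \<noteq> 0"
  shows "boundary_dist w b x = \<bar>lin_f w b x\<bar> / norm w"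
proof -
  define c where "c = lin_f w b x"
  define D where "D = {norm r | r. lin_label w b (x + r) \<noteq> lin_label w b x}"
  have nw: "norm w > 0" using assms by simp
  have lower: "\<bar>c\<bar> / norm w \<le> d" if d: "d \<in> D" for d
  proof -
    obtain r where r: "d = norm r" "(c + w \<bullet> r > 0) \<noteq> (c > 0)"
      using d by (auto simp: D_def lin_label_flip_iff c_def)
    have "\<bar>c\<bar> \<le> \<bar>w \<bullet> r\<bar>" using r(2) by auto
    also have "\<dots> \<le> norm w * norm r" by (rule Cauchy_Schwarz_ineq2)
    finally show ?thesis using nw r(1) by (simp add: divide_simps mult.commute)
  qed
  txt \<open>Every \<open>d > \<bar>c\<bar> / norm w\<close> is the length of a flipping step along \<open>\<plusminus>w\<close>.\<close>
  have upper: "{\<bar>c\<bar> / norm w <..} \<subseteq> D"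
  proof
    fix d assume "d \<in> {\<bar>c\<bar> / norm w <..}"
    hence d: "\<bar>c\<bar> < d * norm w" using nw by (simp add: divide_simps)
    have "0 < d" using d nw by (meson abs_ge_zero le_less_trans zero_less_mult_pos2)
    define s where "s = (if c > 0 then -1 else 1 :: real)"
    define r where "r = (s * d / norm w) *\<^sub>R w"
    have "w \<bullet> r = s * d * norm w"
      using nw by (simp add: r_def power2_norm_eq_inner[symmetric] power2_eq_square)
    hence "(c + w \<bullet> r > 0) \<noteq> (c > 0)"
      using d by (auto simp: s_def)
    moreover have "norm r = d" using \<open>0 < d\<close> nw by (auto simp: r_def s_def)
    ultimately show "d \<in> D" by (auto simp: D_def lin_label_flip_iff c_def)
  qed
  have "Inf D = \<bar>c\<bar> / norm w"
  proof (rule antisym)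
    show "Inf D \<le> \<bar>c\<bar> / norm w"
      using cInf_superset_mono[OF _ _ upper] lower by (auto simp: bdd_below_def)
    show "\<bar>c\<bar> / norm w \<le> Inf D"
      using upper lower by (intro cInf_greatest) auto
  qed
  thus ?thesis by (simp add: boundary_dist_def D_def c_def)
qed

definition normal_flip_prob :: "real \<Rightarrow> real \<Rightarrow> real \<Rightarrow> real" where
  "normal_flip_prob c \<sigma> \<alpha> = measure std_normal_distribution {y. (c + \<alpha> * (\<sigma> * y) > 0) \<noteq> (c > 0)}"

text \<open>Symmetry of \<open>psd_sqrt \<Sigma>\<close> turns \<open>w \<bullet> (psd_sqrt \<Sigma> *v z)\<close> into
  \<open>(psd_sqrt \<Sigma> *v w) \<bullet> z\<close>, a centred normal variable with standard deviation
  \<open>norm (psd_sqrt \<Sigma> *v w)\<close>.\<close>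
lemma label_flip_probability:
  fixes \<Sigma> :: "real^'n^'n" and w x :: "real^'n"
  assumes "psd_matrix \<Sigma>"
  shows "measure (gaussian \<Sigma>) {v \<in> space (gaussian \<Sigma>). lin_label w b (x + \<alpha> *\<^sub>R v) \<noteq> lin_label w b x}
     = normal_flip_prob (lin_f w b x) (norm (psd_sqrt \<Sigma> *v w)) \<alpha>"
proof -
  define S where "S = psd_sqrt \<Sigma>"
  define u where "u = S *v w"
  define c where "c = lin_f w b x"
  define flip where "flip = {y::real. (c + \<alpha> * y > 0) \<noteq> (c > 0)}"
  have [measurable]: "flip \<in> sets borel" unfolding flip_def by measurable
  have self_adj: "inner w (S *v z) = inner u z" for z
    using psd_matrix_psd_sqrt[OF assms] unfolding psd_matrix_iff S_def u_def by blast
  have "(\<lambda>z. S *v z) \<in> borel_measurable borel"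
    by (intro borel_measurable_continuous_onI linear_continuous_on matrix_vector_mul_bounded_linear)
  hence S_meas: "(\<lambda>z. S *v z) \<in> borel_measurable std_gaussian"
    by (simp add: measurable_cong_sets[OF sets_std_gaussian refl])
  have "{v \<in> space (gaussian \<Sigma>). lin_label w b (x + \<alpha> *\<^sub>R v) \<noteq> lin_label w b x}
      = (\<lambda>v. w \<bullet> v) -` flip"
    by (auto simp: flip_def c_def lin_label_flip_iff[where r="_ *\<^sub>R _"] gaussian_def)
  hence "measure (gaussian \<Sigma>) {v \<in> space (gaussian \<Sigma>). lin_label w b (x + \<alpha> *\<^sub>R v) \<noteq> lin_label w b x}
      = measure std_gaussian ((\<lambda>z. u \<bullet> z) -` flip \<inter> space std_gaussian)"
    unfolding gaussian_def S_def[symmetric]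
    by (subst measure_distr[OF S_meas]) (auto simp: self_adj vimage_def)
  also have "\<dots> = measure (distr std_gaussian borel (\<lambda>z. u \<bullet> z)) flip"
    by (rule measure_distr[symmetric]) auto
  also have "\<dots> = measure (distr std_normal_distribution borel ((*) (norm u))) flip"
    by (simp add: distr_std_gaussian_inner)
  also have "\<dots> = normal_flip_prob c (norm u) \<alpha>"
    by (subst measure_distr) (auto simp: normal_flip_prob_def flip_def vimage_def)
  finally show ?thesis by (simp add: c_def u_def S_def)
qed

lemma normal_flip_prob_eq_0:
  assumes "\<alpha> * \<sigma> = 0"
  shows "normal_flip_prob c \<sigma> \<alpha> = 0"
  using assms by (cases "\<alpha> = 0") (auto simp: normal_flip_prob_def)

lemma normal_flip_prob_le:
  assumes "c \<noteq> 0" "\<alpha> * \<sigma> \<noteq> 0"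
  shows "normal_flip_prob c \<sigma> \<alpha> \<le> exp (- (c / (\<alpha> * \<sigma>))\<^sup>2 / 2)"
proof -
  interpret real_distribution std_normal_distribution by (rule real_dist_normal_dist)
  define a where "a = (if c > 0 then - (\<alpha> * \<sigma>) else \<alpha> * \<sigma>)"
  have "normal_flip_prob c \<sigma> \<alpha> \<le> measure std_normal_distribution {y. \<bar>c\<bar> \<le> a * y}"
    unfolding normal_flip_prob_def by (rule finite_measure_mono) (auto simp: a_def algebra_simps)
  also have "\<dots> \<le> exp (- (\<bar>c\<bar> / a)\<^sup>2 / 2)"
    using assms by (intro std_normal_tail_le) (auto simp: a_def)
  also have "(\<bar>c\<bar> / a)\<^sup>2 = (c / (\<alpha> * \<sigma>))\<^sup>2"
    by (simp add: a_def power_divide)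
  finally show ?thesis .
qed

lemma normal_flip_prob_ge:
  assumes "c \<noteq> 0" "0 < \<sigma>" "0 < t"
  shows "measure std_normal_distribution {t<..} \<le> normal_flip_prob c \<sigma> (- c / (\<sigma> * t))"
proof -
  interpret real_distribution std_normal_distribution by (rule real_dist_normal_dist)
  have "c + - c / (\<sigma> * t) * (\<sigma> * y) = c * (t - y) / t" for y
    using assms by (simp add: field_simps)
  moreover have "c * (t - y) / t > 0 \<longleftrightarrow> c < 0" if "t < y" for y
    using assms that by (simp add: zero_less_divide_iff zero_less_mult_iff)
  ultimately show ?thesis
    unfolding normal_flip_prob_def using assms(1) by (intro finite_measure_mono) auto
qed

lemma Inf_normal_flip_prob_ge:
  assumes "c \<noteq> 0" "0 < \<sigma>" "0 < t" and \<epsilon>: "exp (- t\<^sup>2 / 2) \<le> \<epsilon>"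
  shows "ereal (\<bar>c\<bar> / (\<sigma> * t)) \<le> Inf {ereal \<bar>\<alpha>\<bar> | \<alpha>. \<epsilon> \<le> normal_flip_prob c \<sigma> \<alpha>}"
proof (rule Inf_greatest, clarsimp)
  fix \<alpha> assume flip: "\<epsilon> \<le> normal_flip_prob c \<sigma> \<alpha>"
  show "\<bar>c\<bar> / (\<sigma> * t) \<le> \<bar>\<alpha>\<bar>"
  proof (rule ccontr)
    assume "\<not> \<bar>c\<bar> / (\<sigma> * t) \<le> \<bar>\<alpha>\<bar>"
    hence small: "\<bar>\<alpha>\<bar> * \<sigma> * t < \<bar>c\<bar>" using assms by (simp add: field_simps)
    have "0 < \<epsilon>" using \<epsilon> exp_gt_zero less_le_trans by blast
    hence "\<alpha> \<noteq> 0" using flip normal_flip_prob_eq_0[of 0 \<sigma> c] by auto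
    hence "t < \<bar>c / (\<alpha> * \<sigma>)\<bar>"
      using small assms by (simp add: abs_mult field_simps)
    hence "t\<^sup>2 < \<bar>c / (\<alpha> * \<sigma>)\<bar>\<^sup>2"
      using assms(3) by (intro power_strict_mono) auto
    hence "t\<^sup>2 < (c / (\<alpha> * \<sigma>))\<^sup>2" by (simp only: power2_abs)
    hence "exp (- (c / (\<alpha> * \<sigma>))\<^sup>2 / 2) < exp (- t\<^sup>2 / 2)" by simp
    moreover have "normal_flip_prob c \<sigma> \<alpha> \<le> exp (- (c / (\<alpha> * \<sigma>))\<^sup>2 / 2)"
      using normal_flip_prob_le[of c \<alpha> \<sigma>] assms \<open>\<alpha> \<noteq> 0\<close> by simp
    ultimately have "normal_flip_prob c \<sigma> \<alpha> < exp (- t\<^sup>2 / 2)" by (rule le_less_trans[rotated])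
    thus False using flip \<epsilon> by simp
  qed
qed

lemma Inf_normal_flip_prob_le:
  assumes "c \<noteq> 0" "0 < \<sigma>" "0 < t" and \<epsilon>: "\<epsilon> \<le> measure std_normal_distribution {t<..}"
  shows "Inf {ereal \<bar>\<alpha>\<bar> | \<alpha>. \<epsilon> \<le> normal_flip_prob c \<sigma> \<alpha>} \<le> ereal (\<bar>c\<bar> / (\<sigma> * t))"
proof (rule Inf_lower, intro CollectI exI conjI)
  show "ereal (\<bar>c\<bar> / (\<sigma> * t)) = ereal \<bar>- c / (\<sigma> * t)\<bar>"
    using assms by simp
  show "\<epsilon> \<le> normal_flip_prob c \<sigma> (- c / (\<sigma> * t))"
    using \<epsilon> normal_flip_prob_ge[OF assms(1-3)] by (rule order_trans)
qed

lemma efrac_ratio_bounds: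
  assumes "0 < \<sigma>" "0 < n" "0 < c" "0 < s" "0 < s'"
    and "ereal (c / (\<sigma> * s)) \<le> R" "R \<le> ereal (c / (\<sigma> * s'))"
  shows "ereal (1/s) * efrac (ereal n) \<sigma> \<le> efrac R (c/n)
    \<and> efrac R (c/n) \<le> ereal (1/s') * efrac (ereal n) \<sigma>"
proof -
  have scale: "ereal (1/r) * efrac (ereal n) \<sigma> = ereal (c / (\<sigma> * r)) / ereal (c/n)" if "0 < r" for r
    using assms that by (simp add: efrac_def field_simps)
  have "efrac R (c/n) = R / ereal (c/n)" using assms by (simp add: efrac_def)
  moreover have "0 < ereal (c/n)" using assms by simp
  ultimately show ?thesis
    unfolding scale[OF assms(4)] scale[OF assms(5)] using assms(6,7)
    by (simp del: ereal_divide add: ereal_divide_right_mono)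
qed

theorem theorem2:
  fixes \<Sigma> :: "real^'n^'n" and w x :: "real^'n" and b \<epsilon> :: real
  assumes "psd_matrix \<Sigma>" and "trace \<Sigma> = 1"
    and "w \<noteq> 0" and "lin_f w b x \<noteq> 0"
    and "0 < \<epsilon>" and "\<epsilon> < 1/3"
  shows "ereal (sqrt (1 / (2 * ln (1 / \<epsilon>)))) * efrac (ereal (norm w)) (norm (psd_sqrt \<Sigma> *v w))
           \<le> efrac (noise_radius w b \<Sigma> \<epsilon> x) (boundary_dist w b x)
      \<and> efrac (noise_radius w b \<Sigma> \<epsilon> x) (boundary_dist w b x)
           \<le> ereal (sqrt (1 / (1 - sqrt (3 * \<epsilon>)))) * efrac (ereal (norm w)) (norm (psd_sqrt \<Sigma> *v w))"
proof -
  define c where "c = lin_f w b x"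
  define \<sigma> where "\<sigma> = norm (psd_sqrt \<Sigma> *v w)"
  define t1 where "t1 = sqrt (2 * ln (1 / \<epsilon>))"
  define t0 where "t0 = sqrt (1 - sqrt (3 * \<epsilon>))"
  have t: "0 < t1" "0 < t0" "exp (- t1\<^sup>2 / 2) = \<epsilon>"
    using assms(5,6) by (auto simp: t1_def t0_def real_sqrt_less_iff ln_div)
  have roots: "sqrt (1 / (2 * ln (1 / \<epsilon>))) = 1 / t1" "sqrt (1 / (1 - sqrt (3 * \<epsilon>))) = 1 / t0"
    by (simp_all add: t1_def t0_def real_sqrt_divide)
  have radius: "noise_radius w b \<Sigma> \<epsilon> x = Inf {ereal \<bar>\<alpha>\<bar> | \<alpha>. \<epsilon> \<le> normal_flip_prob c \<sigma> \<alpha>}"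
    unfolding noise_radius_def label_flip_probability[OF assms(1)] c_def \<sigma>_def ..
  have dist: "boundary_dist w b x = \<bar>c\<bar> / norm w"
    unfolding c_def by (rule boundary_dist_lin[OF assms(3)])
  show ?thesis
  proof (cases "\<sigma> = 0")
    case True
    hence "noise_radius w b \<Sigma> \<epsilon> x = \<infinity>"
      using assms(5) by (simp add: radius normal_flip_prob_eq_0 top_ereal_def)
    thus ?thesis
      using True assms(3,4) t by (simp add: roots dist efrac_def \<sigma>_def[symmetric] c_def[symmetric])
  next
    case False
    hence "0 < \<sigma>" by (simp add: \<sigma>_def)
    moreover have "\<epsilon> \<le> measure std_normal_distribution {t0<..}"
      using small_epsilon_le_std_normal_tail_bound[OF assms(5,6)] std_normal_tail_ge[of t0] t(2)
      unfolding t0_def by linarith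
    ultimately show ?thesis
      unfolding roots radius dist \<sigma>_def[symmetric] using assms(3,4) t
      by (intro efrac_ratio_bounds Inf_normal_flip_prob_ge Inf_normal_flip_prob_le) (auto simp: c_def)
  qed
qed

end
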